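(* Let $\mathcal{F}$ be a family of finite lattices (considered up to isomorphism) that is closed under vertical sum and contains the $2$-element chain. Let $f(n)$ be the number of $n$-element lattices in $\mathcal{F}$, and let $N \ge 2$ be an integer constant. Then $f(n) \ge \Omega(c^n)$, where $c = f(N)^{1/(N-1)}$; that is, there is a constant $b>0$ such that $f(n) \ge b\,c^n$ for all sufficiently large $n$.
   Context: All lattices are finite, nonempty and unlabeled (counted up to isomorphism). The vertical sum $L+U$ of lattices $L$ and $U$ is the lattice obtained by identifying the top element of $L$ with the bottom element of $U$ (with $L$ below $U$). *)

theory Defs
  imports Complex_Main
begin

text \<open>A finite lattice is represented by its order relation R :: nat rel (a set of pairs);
  its carrier is Field R. Lattices are counted up to isomorphism.\<close>

definition fin_lattice :: "nat rel \<Rightarrow> bool" where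
  "fin_lattice R \<longleftrightarrow> finite (Field R) \<and> Field R \<noteq> {} \<and> partial_order_on (Field R) R \<and>
     (\<forall>x\<in>Field R. \<forall>y\<in>Field R.
        (\<exists>s\<in>Field R. (x,s)\<in>R \<and> (y,s)\<in>R \<and> (\<forall>z\<in>Field R. (x,z)\<in>R \<and> (y,z)\<in>R \<longrightarrow> (s,z)\<in>R)) \<and>
        (\<exists>i\<in>Field R. (i,x)\<in>R \<and> (i,y)\<in>R \<and> (\<forall>z\<in>Field R. (z,x)\<in>R \<and> (z,y)\<in>R \<longrightarrow> (z,i)\<in>R)))"

definition lat_iso :: "nat rel \<Rightarrow> nat rel \<Rightarrow> bool" where
  "lat_iso R S \<longleftrightarrow> (\<exists>g. bij_betw g (Field R) (Field S) \<and>
     (\<forall>x\<in>Field R. \<forall>y\<in>Field R. (x,y)\<in>R \<longleftrightarrow> (g x, g y)\<in>S))"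

definition lat_top :: "nat rel \<Rightarrow> nat" where
  "lat_top R = (THE t. t \<in> Field R \<and> (\<forall>x\<in>Field R. (x,t)\<in>R))"

definition lat_bot :: "nat rel \<Rightarrow> nat" where
  "lat_bot R = (THE b. b \<in> Field R \<and> (\<forall>x\<in>Field R. (b,x)\<in>R))"

text \<open>S is (a representation of) the vertical sum L + U: copies of L and U glued by
  identifying the top of L with the bottom of U, L below U.\<close>
definition is_vsum :: "nat rel \<Rightarrow> nat rel \<Rightarrow> nat rel \<Rightarrow> bool" where
  "is_vsum S L U \<longleftrightarrow> (\<exists>g h. inj_on g (Field L) \<and> inj_on h (Field U) \<and>
     g (lat_top L) = h (lat_bot U) \<and>
     g ` Field L \<inter> h ` Field U = {g (lat_top L)} \<and>
     S = {(g x, g y) | x y. (x,y) \<in> L} \<union> {(h x, h y) | x y. (x,y) \<in> U}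
         \<union> {(g x, h y) | x y. x \<in> Field L \<and> y \<in> Field U})"

definition lat_count :: "nat rel set \<Rightarrow> nat \<Rightarrow> nat" where
  "lat_count F n = card ((\<lambda>R. {S. lat_iso R S}) ` {R \<in> F. card (Field R) = n})"

end

(*
  Gluing an m-element lattice below an n-element one gives an (m+n-1)-element lattice
  from which both summands can be recovered up to isomorphism: the glue point is the
  unique element with exactly m elements below it, its down-set is the lower summand
  and its up-set the upper one. Hence the counting function satisfies
  f m * f n \<le> f (m + n - 1). As the 2-element chain lies in the family, f 2 \<ge> 1 and f is
  monotone, and iterating the inequality gives f (1 + k (N - 1)) \<ge> f N ^ k, which is an
  exponential lower bound with base f N powr (1 / (N - 1)).
*)
theory Submission
  imports Defs
begin

lemma fin_lattice_refl: "fin_lattice R \<Longrightarrow> x \<in> Field R \<Longrightarrow> (x,x) \<in> R"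
  unfolding fin_lattice_def partial_order_on_def preorder_on_def refl_on_def by blast

lemma fin_lattice_trans: "fin_lattice R \<Longrightarrow> (x,y) \<in> R \<Longrightarrow> (y,z) \<in> R \<Longrightarrow> (x,z) \<in> R"
  unfolding fin_lattice_def partial_order_on_def preorder_on_def by (meson transD)

lemma fin_lattice_antisym: "fin_lattice R \<Longrightarrow> (x,y) \<in> R \<Longrightarrow> (y,x) \<in> R \<Longrightarrow> x = y"
  unfolding fin_lattice_def partial_order_on_def by (meson antisymD)

lemma fin_lattice_finite: "fin_lattice R \<Longrightarrow> finite (Field R)"
  unfolding fin_lattice_def by blast

lemma fin_lattice_converse: "fin_lattice R \<Longrightarrow> fin_lattice (R\<inverse>)"
  unfolding fin_lattice_def by simp

lemma lat_bot_eq_lat_top_converse: "lat_bot R = lat_top (R\<inverse>)"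
  unfolding lat_bot_def lat_top_def by simp

lemma fin_lattice_upper_bound:
  assumes R: "fin_lattice R" and "finite A" "A \<noteq> {}" "A \<subseteq> Field R"
  shows "\<exists>s\<in>Field R. \<forall>x\<in>A. (x,s) \<in> R"
  using assms(2-4)
proof (induction A rule: finite_ne_induct)
  case (singleton x)
  then show ?case using fin_lattice_refl[OF R] by auto
next
  case (insert x A)
  then obtain s where s: "s \<in> Field R" "\<forall>y\<in>A. (y,s) \<in> R" by auto
  moreover obtain j where "j \<in> Field R" "(x,j) \<in> R" "(s,j) \<in> R"
    using R s(1) insert.prems unfolding fin_lattice_def by blast
  ultimately show ?case using fin_lattice_trans[OF R] by blast
qed

lemma lat_top:
  assumes R: "fin_lattice R"
  shows "lat_top R \<in> Field R" "x \<in> Field R \<Longrightarrow> (x, lat_top R) \<in> R"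
proof -
  obtain t where t: "t \<in> Field R" "\<forall>x\<in>Field R. (x,t) \<in> R"
    using fin_lattice_upper_bound[OF R fin_lattice_finite[OF R]] R
    unfolding fin_lattice_def by blast
  have "lat_top R = t"
    unfolding lat_top_def using t fin_lattice_antisym[OF R] by blast
  then show "lat_top R \<in> Field R" "x \<in> Field R \<Longrightarrow> (x, lat_top R) \<in> R" using t by auto
qed

lemma lat_bot:
  assumes "fin_lattice R"
  shows "lat_bot R \<in> Field R" "x \<in> Field R \<Longrightarrow> (lat_bot R, x) \<in> R"
  using lat_top[OF fin_lattice_converse[OF assms]]
  by (simp_all add: lat_bot_eq_lat_top_converse)

lemma lat_iso_refl: "lat_iso R R"
  unfolding lat_iso_def by (rule exI[of _ id]) auto

lemma lat_iso_sym:
  assumes "lat_iso R S"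
  shows "lat_iso S R"
proof -
  obtain g where g: "bij_betw g (Field R) (Field S)"
    "\<forall>x\<in>Field R. \<forall>y\<in>Field R. (x,y)\<in>R \<longleftrightarrow> (g x, g y)\<in>S"
    using assms unfolding lat_iso_def by blast
  let ?g' = "inv_into (Field R) g"
  have g': "bij_betw ?g' (Field S) (Field R)"
    using g(1) by (rule bij_betw_inv_into)
  have "(x,y)\<in>S \<longleftrightarrow> (?g' x, ?g' y)\<in>R" if "x \<in> Field S" "y \<in> Field S" for x y
  proof -
    have "?g' x \<in> Field R" "?g' y \<in> Field R" "g (?g' x) = x" "g (?g' y) = y"
      using that g' g(1) by (auto simp: bij_betw_apply bij_betw_inv_into_right)
    then show ?thesis using g(2) by metis
  qed
  then show ?thesis
    unfolding lat_iso_def using g' by blast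
qed

lemma lat_iso_trans:
  assumes "lat_iso R S" "lat_iso S T"
  shows "lat_iso R T"
proof -
  obtain g where g: "bij_betw g (Field R) (Field S)"
    "\<forall>x\<in>Field R. \<forall>y\<in>Field R. (x,y)\<in>R \<longleftrightarrow> (g x, g y)\<in>S"
    using assms(1) unfolding lat_iso_def by blast
  obtain h where h: "bij_betw h (Field S) (Field T)"
    "\<forall>x\<in>Field S. \<forall>y\<in>Field S. (x,y)\<in>S \<longleftrightarrow> (h x, h y)\<in>T"
    using assms(2) unfolding lat_iso_def by blast
  have "(x,y)\<in>R \<longleftrightarrow> ((h \<circ> g) x, (h \<circ> g) y)\<in>T" if "x \<in> Field R" "y \<in> Field R" for x y
    using that g h by (simp add: bij_betw_apply)
  then show ?thesis
    unfolding lat_iso_def using bij_betw_trans[OF g(1) h(1)] by blast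
qed

lemma lat_iso_image_down_set:
  assumes g: "bij_betw g (Field R) (Field S)"
      "\<forall>x\<in>Field R. \<forall>y\<in>Field R. (x,y)\<in>R \<longleftrightarrow> (g x, g y)\<in>S"
    and x: "x \<in> Field R"
  shows "g ` {y. (y,x) \<in> R} = {y. (y, g x) \<in> S}"
proof
  show "g ` {y. (y,x) \<in> R} \<subseteq> {y. (y, g x) \<in> S}"
    using g(2) x by (auto intro: FieldI1)
  show "{y. (y, g x) \<in> S} \<subseteq> g ` {y. (y,x) \<in> R}"
  proof
    fix y assume "y \<in> {y. (y, g x) \<in> S}"
    then have y: "(y, g x) \<in> S" "y \<in> Field S" by (auto intro: FieldI1)
    then obtain z where "z \<in> Field R" "y = g z"
      using g(1) by (auto simp: bij_betw_def)
    then show "y \<in> g ` {y. (y,x) \<in> R}" using g(2) x y by auto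
  qed
qed

lemma lat_iso_image_up_set:
  assumes g: "bij_betw g (Field R) (Field S)"
      "\<forall>x\<in>Field R. \<forall>y\<in>Field R. (x,y)\<in>R \<longleftrightarrow> (g x, g y)\<in>S"
    and x: "x \<in> Field R"
  shows "g ` {y. (x,y) \<in> R} = {y. (g x, y) \<in> S}"
  using lat_iso_image_down_set[of g "R\<inverse>" "S\<inverse>" x] assms by simp

definition iso_class :: "nat rel \<Rightarrow> nat rel set" where
  "iso_class R = {S. lat_iso R S}"

lemma lat_count_eq_card_iso_classes:
  "lat_count F n = card (iso_class ` {R \<in> F. card (Field R) = n})"
  unfolding lat_count_def iso_class_def by simp

lemma iso_class_eq_iff: "iso_class R = iso_class S \<longleftrightarrow> lat_iso R S"
  unfolding iso_class_def using lat_iso_refl lat_iso_sym lat_iso_trans by blast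

lemma lat_iso_relabel:
  assumes "finite (Field R)"
  shows "\<exists>R'. R' \<subseteq> {0..<card (Field R)} \<times> {0..<card (Field R)} \<and> lat_iso R R'"
proof -
  obtain g where g: "bij_betw g (Field R) {0..<card (Field R)}"
    using assms ex_bij_betw_finite_nat by blast
  define R' where "R' = map_prod g g ` R"
  have "Field R' = g ` Field R"
    unfolding R'_def Field_def by force
  then have "bij_betw g (Field R) (Field R')"
    using g by (auto simp: bij_betw_def)
  moreover have "(x,y)\<in>R \<longleftrightarrow> (g x, g y)\<in>R'" if "x \<in> Field R" "y \<in> Field R" for x y
  proof
    show "(x,y)\<in>R \<Longrightarrow> (g x, g y)\<in>R'" unfolding R'_def by force
    assume "(g x, g y)\<in>R'"
    then obtain a b where ab: "(a,b) \<in> R" "g x = g a" "g y = g b"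
      unfolding R'_def by auto
    moreover have "a \<in> Field R" "b \<in> Field R" using ab(1) by (auto intro: FieldI1 FieldI2)
    ultimately show "(x,y)\<in>R" using g that by (metis bij_betw_def inj_onD)
  qed
  moreover have "R' \<subseteq> {0..<card (Field R)} \<times> {0..<card (Field R)}"
    using g unfolding R'_def bij_betw_def by (auto intro: FieldI1 FieldI2)
  ultimately show ?thesis
    unfolding lat_iso_def by blast
qed

lemma finite_iso_classes_of_card:
  "finite (iso_class ` {R. finite (Field R) \<and> card (Field R) = n})"
proof (rule finite_subset)
  show "iso_class ` {R. finite (Field R) \<and> card (Field R) = n}
      \<subseteq> iso_class ` Pow ({0..<n} \<times> {0..<n})"
  proof
    fix X assume "X \<in> iso_class ` {R. finite (Field R) \<and> card (Field R) = n}"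
    then obtain R where R: "finite (Field R)" "card (Field R) = n" "X = iso_class R" by blast
    then obtain R' where "R' \<subseteq> {0..<n} \<times> {0..<n}" "lat_iso R R'"
      using lat_iso_relabel by blast
    then show "X \<in> iso_class ` Pow ({0..<n} \<times> {0..<n})"
      using R iso_class_eq_iff by blast
  qed
qed simp

lemma finite_iso_classes:
  assumes "\<forall>R\<in>F. fin_lattice R"
  shows "finite (iso_class ` {R \<in> F. card (Field R) = n})"
  using assms fin_lattice_finite
  by (intro finite_subset[OF _ finite_iso_classes_of_card[of n]] image_mono) auto

lemma lat_count_pos:
  assumes "\<forall>R\<in>F. fin_lattice R" "R \<in> F"
  shows "lat_count F (card (Field R)) > 0"
  unfolding lat_count_eq_card_iso_classes
  using finite_iso_classes[OF assms(1)] assms(2) by (auto simp: card_gt_0_iff)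

locale vertical_sum =
  fixes S L U :: "nat rel" and g h :: "nat \<Rightarrow> nat"
  assumes L: "fin_lattice L" and U: "fin_lattice U"
    and inj_g: "inj_on g (Field L)" and inj_h: "inj_on h (Field U)"
    and glue: "g (lat_top L) = h (lat_bot U)"
    and overlap: "g ` Field L \<inter> h ` Field U = {g (lat_top L)}"
    and S_def: "S = {(g x, g y) | x y. (x,y) \<in> L} \<union> {(h x, h y) | x y. (x,y) \<in> U}
         \<union> {(g x, h y) | x y. x \<in> Field L \<and> y \<in> Field U}"
begin

abbreviation glue_point :: nat where
  "glue_point \<equiv> g (lat_top L)"

lemma g_eq_iff: "a \<in> Field L \<Longrightarrow> b \<in> Field L \<Longrightarrow> g a = g b \<longleftrightarrow> a = b"
  using inj_g by (meson inj_onD)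

lemma h_eq_iff: "a \<in> Field U \<Longrightarrow> b \<in> Field U \<Longrightarrow> h a = h b \<longleftrightarrow> a = b"
  using inj_h by (meson inj_onD)

lemma g_eq_h_imp_glue:
  assumes "a \<in> Field L" "b \<in> Field U" "g a = h b"
  shows "a = lat_top L" "b = lat_bot U"
proof -
  have "g a = g (lat_top L)" using overlap assms by blast
  then show "a = lat_top L" using g_eq_iff[OF assms(1) lat_top(1)[OF L]] by simp
  then show "b = lat_bot U" using assms glue h_eq_iff[OF assms(2) lat_bot(1)[OF U]] by simp
qed

lemma Field_eq: "Field S = g ` Field L \<union> h ` Field U"
proof
  show "Field S \<subseteq> g ` Field L \<union> h ` Field U"
    unfolding S_def Field_def by (auto intro: FieldI1 FieldI2)
  show "g ` Field L \<union> h ` Field U \<subseteq> Field S"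
  proof -
    have "(g x, g x) \<in> S" if "x \<in> Field L" for x
      unfolding S_def using fin_lattice_refl[OF L that] by blast
    moreover have "(h x, h x) \<in> S" if "x \<in> Field U" for x
      unfolding S_def using fin_lattice_refl[OF U that] by blast
    ultimately show ?thesis by (auto intro: FieldI1)
  qed
qed

lemma finite_Field: "finite (Field S)"
  using Field_eq fin_lattice_finite[OF L] fin_lattice_finite[OF U] by simp

lemma card_Field: "card (Field S) = card (Field L) + card (Field U) - 1"
proof -
  have "card (g ` Field L) + card (h ` Field U) = card (Field S) + card (g ` Field L \<inter> h ` Field U)"
    unfolding Field_eq using fin_lattice_finite[OF L] fin_lattice_finite[OF U]
    by (intro card_Un_Int) auto
  then show ?thesis
    using overlap card_image[OF inj_g] card_image[OF inj_h] by simp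
qed

lemma in_S_g_iff:
  assumes "a \<in> Field L" "b \<in> Field L"
  shows "(g a, g b) \<in> S \<longleftrightarrow> (a,b) \<in> L"
proof
  assume "(g a, g b) \<in> S"
  then consider p q where "(p,q) \<in> L" "g a = g p" "g b = g q"
    | p q where "(p,q) \<in> U" "g a = h p" "g b = h q"
    | q where "q \<in> Field U" "g b = h q"
    unfolding S_def by blast
  then show "(a,b) \<in> L"
  proof cases
    case 1
    then show ?thesis using assms g_eq_iff by (metis FieldI1 FieldI2)
  next
    case 2
    then have "a = lat_top L" "b = lat_top L"
      using assms g_eq_h_imp_glue by (meson FieldI1 FieldI2)+
    then show ?thesis using fin_lattice_refl[OF L] assms by simp
  next
    case 3
    then show ?thesis using assms g_eq_h_imp_glue lat_top(2)[OF L] by metis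
  qed
qed (auto simp: S_def)

lemma in_S_h_iff:
  assumes "a \<in> Field U" "b \<in> Field U"
  shows "(h a, h b) \<in> S \<longleftrightarrow> (a,b) \<in> U"
proof
  assume "(h a, h b) \<in> S"
  then consider p q where "(p,q) \<in> L" "h a = g p" "h b = g q"
    | p q where "(p,q) \<in> U" "h a = h p" "h b = h q"
    | p where "p \<in> Field L" "h a = g p"
    unfolding S_def by blast
  then show "(a,b) \<in> U"
  proof cases
    case 1
    then have "a = lat_bot U" "b = lat_bot U"
      using assms g_eq_h_imp_glue(2) by (metis FieldI1 FieldI2)+
    then show ?thesis using fin_lattice_refl[OF U] assms by simp
  next
    case 2
    then show ?thesis using assms h_eq_iff by (metis FieldI1 FieldI2)
  next
    case 3
    then show ?thesis using assms g_eq_h_imp_glue lat_bot(2)[OF U] by metis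
  qed
qed (auto simp: S_def)

lemma down_set_g:
  assumes a: "a \<in> Field L"
  shows "{y. (y, g a) \<in> S} = g ` {p. (p,a) \<in> L}"
proof
  show "g ` {p. (p,a) \<in> L} \<subseteq> {y. (y, g a) \<in> S}"
    unfolding S_def by blast
  show "{y. (y, g a) \<in> S} \<subseteq> g ` {p. (p,a) \<in> L}"
  proof
    fix y assume "y \<in> {y. (y, g a) \<in> S}"
    then consider p q where "(p,q) \<in> L" "y = g p" "g a = g q"
      | p q where "(p,q) \<in> U" "y = h p" "g a = h q"
      | p q where "p \<in> Field L" "q \<in> Field U" "y = g p" "g a = h q"
      unfolding S_def by blast
    then show "y \<in> g ` {p. (p,a) \<in> L}"
    proof cases
      case 1
      then show ?thesis using a g_eq_iff by (metis FieldI2 image_eqI mem_Collect_eq)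
    next
      case 2
      moreover have "p \<in> Field U" "q \<in> Field U"
        using 2(1) by (auto intro: FieldI1 FieldI2)
      ultimately have "a = lat_top L" "q = lat_bot U" "p \<in> Field U"
        using a g_eq_h_imp_glue by auto
      then have "p = lat_bot U"
        using 2 lat_bot[OF U] fin_lattice_antisym[OF U] by blast
      then have "y = g a" using 2 glue \<open>a = lat_top L\<close> by simp
      then show ?thesis using a fin_lattice_refl[OF L] by blast
    next
      case 3
      then have "a = lat_top L" using a g_eq_h_imp_glue by blast
      then show ?thesis using 3 lat_top(2)[OF L] by auto
    qed
  qed
qed

lemma down_set_glue_point: "{y. (y, glue_point) \<in> S} = g ` Field L"
proof -
  have "{p. (p, lat_top L) \<in> L} = Field L"
    using lat_top[OF L] by (auto intro: FieldI1)
  then show ?thesis using down_set_g[OF lat_top(1)[OF L]] by simp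
qed

lemma up_set_glue_point: "{y. (glue_point, y) \<in> S} = h ` Field U"
proof
  show "h ` Field U \<subseteq> {y. (glue_point, y) \<in> S}"
    using in_S_h_iff lat_bot[OF U] glue by auto
  show "{y. (glue_point, y) \<in> S} \<subseteq> h ` Field U"
  proof
    fix y assume "y \<in> {y. (glue_point, y) \<in> S}"
    then consider p q where "(p,q) \<in> L" "glue_point = g p" "y = g q"
      | q where "q \<in> Field U" "y = h q"
      unfolding S_def by (auto intro: FieldI2)
    then show "y \<in> h ` Field U"
    proof cases
      case 1
      then have "p = lat_top L" "q \<in> Field L"
        using g_eq_iff lat_top(1)[OF L] by (metis FieldI1 FieldI2)+
      then have "q = lat_top L"
        using 1 lat_top[OF L] fin_lattice_antisym[OF L] by blast
      then have "y = h (lat_bot U)" using 1 glue by simp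
      then show ?thesis using lat_bot(1)[OF U] by blast
    qed auto
  qed
qed

lemma card_down_set_eq_iff:
  assumes x: "x \<in> Field S"
  shows "card {y. (y, x) \<in> S} = card (Field L) \<longleftrightarrow> x = glue_point"
proof
  assume "x = glue_point"
  then show "card {y. (y, x) \<in> S} = card (Field L)"
    using down_set_glue_point card_image[OF inj_g] by simp
next
  assume c: "card {y. (y, x) \<in> S} = card (Field L)"
  from x consider a where "a \<in> Field L" "x = g a"
    | a where "a \<in> Field U" "x = h a" "x \<notin> g ` Field L"
    unfolding Field_eq by blast
  then show "x = glue_point"
  proof cases
    case 1
    have sub: "{p. (p,a) \<in> L} \<subseteq> Field L" by (auto intro: FieldI1)
    have "card {p. (p,a) \<in> L} = card (Field L)"
      using c 1 down_set_g card_image[OF inj_on_subset[OF inj_g sub]] by simp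
    then have "{p. (p,a) \<in> L} = Field L"
      using card_subset_eq[OF fin_lattice_finite[OF L] sub] by simp
    then have "a = lat_top L"
      using lat_top[OF L] 1(1) fin_lattice_antisym[OF L] by blast
    then show ?thesis using 1 by simp
  next
    case 2
    have "insert x (g ` Field L) \<subseteq> {y. (y, x) \<in> S}"
      using 2 fin_lattice_refl[OF U] in_S_h_iff unfolding S_def by blast
    then have "card (insert x (g ` Field L)) \<le> card {y. (y, x) \<in> S}"
      using finite_Field by (intro card_mono) (auto intro: finite_subset FieldI1)
    moreover have "card (insert x (g ` Field L)) = card (Field L) + 1"
      using 2 fin_lattice_finite[OF L] card_image[OF inj_g] by simp
    ultimately show ?thesis using c by simp
  qed
qed

lemma is_vsum: "is_vsum S L U"
  unfolding is_vsum_def using inj_g inj_h glue overlap S_def by blast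

end

lemma lat_iso_of_order_embeddings:
  assumes \<phi>: "bij_betw \<phi> (Field S) (Field S')"
      "\<forall>x\<in>Field S. \<forall>y\<in>Field S. (x,y)\<in>S \<longleftrightarrow> (\<phi> x, \<phi> y)\<in>S'"
    and g: "inj_on g (Field L)" "g ` Field L \<subseteq> Field S"
      "\<And>a b. a \<in> Field L \<Longrightarrow> b \<in> Field L \<Longrightarrow> (g a, g b) \<in> S \<longleftrightarrow> (a,b) \<in> L"
    and g': "inj_on g' (Field L')"
      "\<And>a b. a \<in> Field L' \<Longrightarrow> b \<in> Field L' \<Longrightarrow> (g' a, g' b) \<in> S' \<longleftrightarrow> (a,b) \<in> L'"
    and img: "\<phi> ` g ` Field L = g' ` Field L'"
  shows "lat_iso L L'"
proof -
  define \<psi> where "\<psi> = inv_into (Field L') g' \<circ> \<phi> \<circ> g"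
  have \<psi>: "\<psi> z \<in> Field L'" "g' (\<psi> z) = \<phi> (g z)" if "z \<in> Field L" for z
  proof -
    have "\<phi> (g z) \<in> g' ` Field L'" using img that by blast
    then show "\<psi> z \<in> Field L'" "g' (\<psi> z) = \<phi> (g z)"
      unfolding \<psi>_def by (simp_all add: inv_into_into f_inv_into_f)
  qed
  have "bij_betw g (Field L) (g ` Field L)"
    using g(1) by (rule inj_on_imp_bij_betw)
  moreover have "bij_betw \<phi> (g ` Field L) (g' ` Field L')"
    using img bij_betw_subset[OF \<phi>(1) g(2)] by simp
  moreover have "bij_betw (inv_into (Field L') g') (g' ` Field L') (Field L')"
    using g'(1) by (simp add: bij_betw_inv_into inj_on_imp_bij_betw)
  ultimately have "bij_betw \<psi> (Field L) (Field L')"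
    unfolding \<psi>_def by (metis bij_betw_trans comp_assoc)
  moreover have "(x,y)\<in>L \<longleftrightarrow> (\<psi> x, \<psi> y)\<in>L'" if xy: "x \<in> Field L" "y \<in> Field L" for x y
  proof -
    have "g x \<in> Field S" "g y \<in> Field S" using g(2) xy by auto
    then have "(x,y)\<in>L \<longleftrightarrow> (\<phi> (g x), \<phi> (g y)) \<in> S'"
      using g(3)[OF xy] \<phi>(2) by simp
    also have "\<dots> \<longleftrightarrow> (\<psi> x, \<psi> y) \<in> L'"
      using \<psi>[OF xy(1)] \<psi>[OF xy(2)] g'(2) by metis
    finally show ?thesis .
  qed
  ultimately show ?thesis
    unfolding lat_iso_def by blast
qed

lemma vertical_sum_summands_lat_iso:
  assumes A: "vertical_sum S L U g h" and B: "vertical_sum S' L' U' g' h'"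
    and card_L: "card (Field L) = card (Field L')" and iso: "lat_iso S S'"
  shows "lat_iso L L'" "lat_iso U U'"
proof -
  interpret A: vertical_sum S L U g h by (rule A)
  interpret B: vertical_sum S' L' U' g' h' by (rule B)
  obtain \<phi> where \<phi>: "bij_betw \<phi> (Field S) (Field S')"
      "\<forall>x\<in>Field S. \<forall>y\<in>Field S. (x,y)\<in>S \<longleftrightarrow> (\<phi> x, \<phi> y)\<in>S'"
    using iso unfolding lat_iso_def by blast
  have glue_in: "A.glue_point \<in> Field S"
    using A.Field_eq lat_top(1)[OF A.L] by auto
  \<comment> \<open>The glue point is the only element with card (Field L) elements below it, so \<phi> maps it to that of S'.\<close>
  have "card {y. (y, \<phi> A.glue_point) \<in> S'} = card {y. (y, A.glue_point) \<in> S}"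
    using lat_iso_image_down_set[OF \<phi> glue_in]
      card_image[OF inj_on_subset[OF bij_betw_imp_inj_on[OF \<phi>(1)]]]
    by (metis (no_types, lifting) FieldI1 mem_Collect_eq subsetI)
  also have "\<dots> = card (Field L')"
    using A.card_down_set_eq_iff[OF glue_in] card_L by simp
  finally have "\<phi> A.glue_point = B.glue_point"
    using B.card_down_set_eq_iff bij_betw_apply[OF \<phi>(1) glue_in] by blast
  then have "\<phi> ` g ` Field L = g' ` Field L'" "\<phi> ` h ` Field U = h' ` Field U'"
    using lat_iso_image_down_set[OF \<phi> glue_in] lat_iso_image_up_set[OF \<phi> glue_in]
      A.down_set_glue_point B.down_set_glue_point A.up_set_glue_point B.up_set_glue_point
    by auto
  then show "lat_iso L L'" "lat_iso U U'"
    using lat_iso_of_order_embeddings[OF \<phi>] A.Field_eq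
      A.inj_g A.inj_h B.inj_g B.inj_h A.in_S_g_iff A.in_S_h_iff B.in_S_g_iff B.in_S_h_iff
    by (metis Un_upper1 Un_upper2)+
qed

definition vsum_shift :: "nat rel \<Rightarrow> nat rel \<Rightarrow> nat \<Rightarrow> nat" where
  "vsum_shift L U x = (if x = lat_bot U then lat_top L else Suc (Max (Field L)) + x)"

definition vsum_rel :: "nat rel \<Rightarrow> nat rel \<Rightarrow> nat rel" where
  "vsum_rel L U = L \<union> map_prod (vsum_shift L U) (vsum_shift L U) ` U
     \<union> Field L \<times> vsum_shift L U ` Field U"

lemma vertical_sum_vsum_rel:
  assumes L: "fin_lattice L" and U: "fin_lattice U"
  shows "vertical_sum (vsum_rel L U) L U id (vsum_shift L U)"
proof -
  let ?h = "vsum_shift L U"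
  have shift_notin: "Suc (Max (Field L) + x) \<notin> Field L" for x
    using Max_ge[OF fin_lattice_finite[OF L]] by fastforce
  have shift_ne_top: "Suc (Max (Field L) + x) \<noteq> lat_top L" for x
    using shift_notin lat_top(1)[OF L] by metis
  have "inj_on ?h (Field U)"
    by (auto simp: inj_on_def vsum_shift_def shift_ne_top shift_ne_top[symmetric] split: if_splits)
  moreover have "id ` Field L \<inter> ?h ` Field U = {id (lat_top L)}"
    using lat_top(1)[OF L] lat_bot(1)[OF U]
    by (auto simp: vsum_shift_def image_iff shift_notin split: if_splits)
  moreover have "vsum_rel L U = {(id x, id y) | x y. (x,y) \<in> L} \<union> {(?h x, ?h y) | x y. (x,y) \<in> U}
         \<union> {(id x, ?h y) | x y. x \<in> Field L \<and> y \<in> Field U}"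
    unfolding vsum_rel_def by auto
  ultimately show ?thesis
    using L U by unfold_locales (simp_all add: vsum_shift_def)
qed

lemma is_vsum_vsum_rel: "fin_lattice L \<Longrightarrow> fin_lattice U \<Longrightarrow> is_vsum (vsum_rel L U) L U"
  using vertical_sum.is_vsum[OF vertical_sum_vsum_rel] .

lemma card_Field_vsum_rel:
  "fin_lattice L \<Longrightarrow> fin_lattice U
    \<Longrightarrow> card (Field (vsum_rel L U)) = card (Field L) + card (Field U) - 1"
  using vertical_sum.card_Field[OF vertical_sum_vsum_rel] .

lemma lat_iso_vsum_rel_cancel:
  assumes "fin_lattice L" "fin_lattice U" "fin_lattice L'" "fin_lattice U'"
    and "card (Field L) = card (Field L')" "lat_iso (vsum_rel L U) (vsum_rel L' U')"
  shows "lat_iso L L'" "lat_iso U U'"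
  using vertical_sum_summands_lat_iso[OF vertical_sum_vsum_rel vertical_sum_vsum_rel] assms
  by blast+

lemma lat_count_mult_le:
  assumes lat: "\<forall>R\<in>F. fin_lattice R"
    and vsum_closed: "\<forall>L\<in>F. \<forall>U\<in>F. \<forall>S. is_vsum S L U \<longrightarrow> S \<in> F"
  shows "lat_count F m * lat_count F n \<le> lat_count F (m + n - 1)"
proof -
  define F\<^sub>k where "F\<^sub>k k = {R \<in> F. card (Field R) = k}" for k
  define rep where "rep k = inv_into (F\<^sub>k k) iso_class" for k
  have rep: "rep k X \<in> F" "fin_lattice (rep k X)" "card (Field (rep k X)) = k"
      "iso_class (rep k X) = X"
    if "X \<in> iso_class ` F\<^sub>k k" for k X
    using that inv_into_into[OF that] f_inv_into_f[OF that] lat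
    unfolding rep_def F\<^sub>k_def by auto
  define \<Phi> where "\<Phi> = (\<lambda>(X,Y). iso_class (vsum_rel (rep m X) (rep n Y)))"
  have "\<Phi> (X,Y) \<in> iso_class ` F\<^sub>k (m + n - 1)"
    if XY: "X \<in> iso_class ` F\<^sub>k m" "Y \<in> iso_class ` F\<^sub>k n" for X Y
  proof -
    have "vsum_rel (rep m X) (rep n Y) \<in> F"
      using vsum_closed rep(1,2)[OF XY(1)] rep(1,2)[OF XY(2)] is_vsum_vsum_rel by blast
    moreover have "card (Field (vsum_rel (rep m X) (rep n Y))) = m + n - 1"
      using card_Field_vsum_rel rep(2,3)[OF XY(1)] rep(2,3)[OF XY(2)] by simp
    ultimately show ?thesis
      unfolding \<Phi>_def F\<^sub>k_def by simp
  qed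
  then have into: "\<Phi> ` (iso_class ` F\<^sub>k m \<times> iso_class ` F\<^sub>k n) \<subseteq> iso_class ` F\<^sub>k (m + n - 1)"
    by auto
  have summands_eq: "X = X' \<and> Y = Y'"
    if XY: "X \<in> iso_class ` F\<^sub>k m" "Y \<in> iso_class ` F\<^sub>k n"
      and XY': "X' \<in> iso_class ` F\<^sub>k m" "Y' \<in> iso_class ` F\<^sub>k n"
      and eq: "\<Phi> (X,Y) = \<Phi> (X',Y')" for X Y X' Y'
  proof -
    have "lat_iso (rep m X) (rep m X') \<and> lat_iso (rep n Y) (rep n Y')"
      using eq lat_iso_vsum_rel_cancel rep(2,3)[OF XY(1)] rep(2,3)[OF XY'(1)]
        rep(2)[OF XY(2)] rep(2)[OF XY'(2)]
      unfolding \<Phi>_def by (simp add: iso_class_eq_iff)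
    then show ?thesis
      using rep(4) XY XY' iso_class_eq_iff by metis
  qed
  have "inj_on \<Phi> (iso_class ` F\<^sub>k m \<times> iso_class ` F\<^sub>k n)"
  proof (rule inj_onI)
    fix p q
    assume pq: "p \<in> iso_class ` F\<^sub>k m \<times> iso_class ` F\<^sub>k n"
      "q \<in> iso_class ` F\<^sub>k m \<times> iso_class ` F\<^sub>k n" "\<Phi> p = \<Phi> q"
    obtain X Y X' Y' where "p = (X,Y)" "q = (X',Y')" by fastforce
    then show "p = q" using pq summands_eq[of X Y X' Y'] by simp
  qed
  moreover have "finite (iso_class ` F\<^sub>k (m + n - 1))"
    using finite_iso_classes[OF lat] unfolding F\<^sub>k_def .
  ultimately have "card (iso_class ` F\<^sub>k m \<times> iso_class ` F\<^sub>k n)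
      \<le> card (iso_class ` F\<^sub>k (m + n - 1))"
    using into by (intro card_inj_on_le)
  then show ?thesis
    unfolding lat_count_eq_card_iso_classes F\<^sub>k_def card_cartesian_product .
qed

lemma shifted_supermult_mono:
  fixes f :: "nat \<Rightarrow> nat"
  assumes mult: "\<And>m n. f m * f n \<le> f (m + n - 1)" and f2: "f 2 \<ge> 1"
  shows "mono f"
  unfolding mono_iff_le_Suc
proof
  fix n
  have "f n \<le> f n * f 2" using f2 by simp
  also have "\<dots> \<le> f (Suc n)" using mult[of n 2] by simp
  finally show "f n \<le> f (Suc n)" .
qed

lemma shifted_supermult_power:
  fixes f :: "nat \<Rightarrow> nat"
  assumes mult: "\<And>m n. f m * f n \<le> f (m + n - 1)" and "N \<ge> 1" "k \<ge> 1"
  shows "f N ^ k \<le> f (1 + k * (N - 1))"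
  using \<open>k \<ge> 1\<close>
proof (induction k rule: dec_induct)
  case base
  then show ?case using \<open>N \<ge> 1\<close> by simp
next
  case (step k)
  have "f N ^ Suc k \<le> f (1 + k * (N - 1)) * f N" using step.IH by simp
  also have "\<dots> \<le> f (1 + k * (N - 1) + N - 1)" by (rule mult)
  also have "1 + k * (N - 1) + N - 1 = 1 + Suc k * (N - 1)" using \<open>N \<ge> 1\<close> by simp
  finally show ?case .
qed

lemma shifted_supermult_lower_bound:
  fixes f :: "nat \<Rightarrow> nat"
  assumes mult: "\<And>m n. f m * f n \<le> f (m + n - 1)" and f2: "f 2 \<ge> 1"
    and N: "N \<ge> 2" and fN: "f N \<ge> 1" and n: "n \<ge> N"
  shows "real (f n) \<ge> 1 / real (f N) * (real (f N) powr (1 / (real N - 1))) ^ n"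
proof -
  define q where "q = real (f N)"
  have q: "q \<ge> 1" using fN unfolding q_def by simp
  define k where "k = (n - 1) div (N - 1)"
  have k: "k \<ge> 1" unfolding k_def using N n by (simp add: Suc_le_eq div_greater_zero_iff)
  have n_eq: "n - 1 = k * (N - 1) + (n - 1) mod (N - 1)"
    unfolding k_def by (rule div_mult_mod_eq[symmetric])
  moreover have "(n - 1) mod (N - 1) < N - 1"
    using N by simp
  ultimately have "n \<le> k * (N - 1) + (N - 1)"
    by linarith
  then have "real n \<le> real (k * (N - 1) + (N - 1))"
    by (rule of_nat_mono)
  also have "\<dots> = (real k + 1) * (real N - 1)"
    using N by (simp add: of_nat_diff distrib_right)
  finally have "real n \<le> (real k + 1) * (real N - 1)" .
  moreover have "real N - 1 > 0" using N by simp
  ultimately have "real n / (real N - 1) \<le> real k + 1"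
    by (simp only: pos_divide_le_eq)
  then have exponent: "real n / (real N - 1) - 1 \<le> real k"
    by simp
  have "1 / q * (q powr (1 / (real N - 1))) ^ n = 1 / q * q powr (real n * (1 / (real N - 1)))"
    using q by (simp add: powr_power)
  also have "\<dots> = q powr (real n / (real N - 1) - 1)"
    using q by (simp add: powr_diff)
  also have "\<dots> \<le> q ^ k"
    using powr_mono[OF exponent q] q by (simp add: powr_realpow)
  also have "\<dots> = real (f N ^ k)"
    unfolding q_def by simp
  also have "\<dots> \<le> real (f (1 + k * (N - 1)))"
    using shifted_supermult_power[OF mult _ k, of N] N by linarith
  also have "\<dots> \<le> real (f n)"
  proof -
    have "1 + k * (N - 1) \<le> n" using n_eq n N by linarith
    then show ?thesis using monoD[OF shifted_supermult_mono[OF mult f2]] by simp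
  qed
  finally show ?thesis
    unfolding q_def .
qed

lemma shifted_supermult_exponential_lower_bound:
  fixes f :: "nat \<Rightarrow> nat"
  assumes mult: "\<And>m n. f m * f n \<le> f (m + n - 1)" and f2: "f 2 \<ge> 1" and N: "N \<ge> 2"
  shows "\<exists>b>0. \<forall>\<^sub>F n in sequentially. real (f n) \<ge> b * (real (f N) powr (1 / (real N - 1))) ^ n"
proof (cases "f N = 0")
  case True
  have "\<forall>\<^sub>F n in sequentially. real (f n) \<ge> 1 * (real (f N) powr (1 / (real N - 1))) ^ n"
    using eventually_gt_at_top[of 0] by eventually_elim (simp add: True power_0_left)
  then show ?thesis by (intro exI[of _ 1]) simp
next
  case False
  then have "\<forall>\<^sub>F n in sequentially.
      real (f n) \<ge> 1 / real (f N) * (real (f N) powr (1 / (real N - 1))) ^ n"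
    using shifted_supermult_lower_bound[OF mult f2 N] unfolding eventually_sequentially
    by (metis less_one not_le)
  moreover have "1 / real (f N) > 0" using False by simp
  ultimately show ?thesis
    by blast
qed

theorem theorem2p3:
  fixes F :: "nat rel set" and N :: nat
  assumes lat: "\<forall>R\<in>F. fin_lattice R"
    and iso_closed: "\<forall>R S. R \<in> F \<longrightarrow> lat_iso R S \<longrightarrow> S \<in> F"
    and vsum_closed: "\<forall>L\<in>F. \<forall>U\<in>F. \<forall>S. is_vsum S L U \<longrightarrow> S \<in> F"
    and chain2: "{(0,0),(0,1),(1,1)} \<in> F"
    and N: "N \<ge> 2"
  shows "\<exists>b>0. \<forall>\<^sub>F n in sequentially.
           real (lat_count F n) \<ge> b * (real (lat_count F N) powr (1 / (real N - 1))) ^ n"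
proof -
  have "card (Field {(0::nat,0::nat),(0,1),(1,1)}) = 2"
    by (simp add: Field_def)
  then have "lat_count F 2 \<ge> 1"
    using lat_count_pos[OF lat chain2] by simp
  then show ?thesis
    using shifted_supermult_exponential_lower_bound[OF lat_count_mult_le[OF lat vsum_closed] _ N]
    by blast
qed

end
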